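(* Let $0<T\le1$ and $f\in_d A^M_T$ be of the form $f(x)=c(b-x)$ for $x\in(0,b)$ and $f(x)=0$ for $x\in[b,T)$, for some $0<b\le T$ and $c>0$. Then $f\in_d I^M_T$.
   Context: Setting: intrinsic location functionals $L$ on a shift-invariant class $H$ of period-$1$ functions (maps $L:H\times\mathcal I\to\mathbb R\cup\{\infty\}$, $\mathcal I$ the compact nondegenerate intervals, that are measurable, satisfy $L(g,I)\in I\cup\{\infty\}$, $L(g,I)=L(\theta_cg,I-c)+c$ with $\theta_cg(x)=g(x+c)$, and: $I_2\subseteq I_1$, $L(g,I_1)\in I_2\Rightarrow L(g,I_2)=L(g,I_1)$; $I_2\subseteq I_1$, $L(g,I_2)\ne\infty\Rightarrow L(g,I_1)\ne\infty$). $L$ is first-time if it admits a representation by sets $S(g)\subseteq\mathbb R$ with $S(g)=S(\theta_cg)+c$ and shift-compatible partial orders $\preceq$ on $S(g)$ such that $L(g,I)=\infty$ if $S(g)\cap I=\emptyset$ and otherwise is the unique $\preceq$-maximal element of $S(g)\cap I$, and in which $t_1\le t_2$ implies $t_2\preceq t_1$. A periodic stationary process with period $1$ is a stationary process with continuous period-$1$ sample paths in $H$. $I^M_T$ is the set of all laws of $L(\mathbf X,[0,T])$ over all first-time $L$ and all periodic stationary $\mathbf X$ with period $1$. $A^M_T$ is the class of probability distributions on $[0,T]\cup\{\infty\}$ absolutely continuous on $(0,T)$ with càdlàg non-increasing density there (so $\int_0^Tf\le1$). $f\in_d A$ means some $F\in A$ has density $f$ on $(0,T)$. *)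

theory Defs
  imports "HOL-Probability.Probability"
begin

definition shift :: "real \<Rightarrow> (real \<Rightarrow> real) \<Rightarrow> (real \<Rightarrow> real)" where
  "shift c g = (\<lambda>x. g (x + c))"

definition Hper :: "(real \<Rightarrow> real) set" where
  "Hper = {g. continuous_on UNIV g \<and> (\<forall>x. g (x + 1) = g x)}"

definition path_space :: "(real \<Rightarrow> real) measure" where
  "path_space = Pi\<^sub>M UNIV (\<lambda>_. (borel :: real measure))"

definition intrinsic_location :: "((real \<Rightarrow> real) \<Rightarrow> real \<Rightarrow> real \<Rightarrow> ereal) \<Rightarrow> bool" where
  "intrinsic_location L \<longleftrightarrow>
     (\<forall>a b. a < b \<longrightarrow> (\<lambda>g. L g a b) \<in> borel_measurable (restrict_space path_space Hper)) \<and>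
     (\<forall>g\<in>Hper. \<forall>a b. a < b \<longrightarrow> L g a b \<in> ereal ` {a..b} \<union> {\<infinity>}) \<and>
     (\<forall>g\<in>Hper. \<forall>a b c. a < b \<longrightarrow> L g a b = L (shift c g) (a - c) (b - c) + ereal c) \<and>
     (\<forall>g\<in>Hper. \<forall>a1 b1 a2 b2. a2 < b2 \<longrightarrow> a1 \<le> a2 \<longrightarrow> b2 \<le> b1 \<longrightarrow>
         L g a1 b1 \<in> ereal ` {a2..b2} \<longrightarrow> L g a2 b2 = L g a1 b1) \<and>
     (\<forall>g\<in>Hper. \<forall>a1 b1 a2 b2. a2 < b2 \<longrightarrow> a1 \<le> a2 \<longrightarrow> b2 \<le> b1 \<longrightarrow>
         L g a2 b2 \<noteq> \<infinity> \<longrightarrow> L g a1 b1 \<noteq> \<infinity>)"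

text \<open>First-time intrinsic location functionals: representation by sets S g and
  shift-compatible partial orders le g on S g.\<close>
definition first_time :: "((real \<Rightarrow> real) \<Rightarrow> real \<Rightarrow> real \<Rightarrow> ereal) \<Rightarrow> bool" where
  "first_time L \<longleftrightarrow>
    (\<exists>(S :: (real \<Rightarrow> real) \<Rightarrow> real set) (le :: (real \<Rightarrow> real) \<Rightarrow> real \<Rightarrow> real \<Rightarrow> bool).
       (\<forall>g\<in>Hper. \<forall>c. S g = (\<lambda>t. t + c) ` S (shift c g)) \<and>
       (\<forall>g\<in>Hper. (\<forall>t\<in>S g. le g t t) \<and>
                  (\<forall>s\<in>S g. \<forall>t\<in>S g. le g s t \<longrightarrow> le g t s \<longrightarrow> s = t) \<and>
                  (\<forall>r\<in>S g. \<forall>s\<in>S g. \<forall>t\<in>S g. le g r s \<longrightarrow> le g s t \<longrightarrow> le g r t)) \<and>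
       (\<forall>g\<in>Hper. \<forall>c. \<forall>s\<in>S (shift c g). \<forall>t\<in>S (shift c g).
           le (shift c g) s t \<longleftrightarrow> le g (s + c) (t + c)) \<and>
       (\<forall>g\<in>Hper. \<forall>t1\<in>S g. \<forall>t2\<in>S g. t1 \<le> t2 \<longrightarrow> le g t2 t1) \<and>
       (\<forall>g\<in>Hper. \<forall>a b. a < b \<longrightarrow>
          (if S g \<inter> {a..b} = {} then L g a b = \<infinity>
           else (\<exists>t. (t \<in> S g \<inter> {a..b} \<and> (\<forall>s\<in>S g \<inter> {a..b}. le g t s \<longrightarrow> s = t)) \<and>
                      (\<forall>t'. (t' \<in> S g \<inter> {a..b} \<and> (\<forall>s\<in>S g \<inter> {a..b}. le g t' s \<longrightarrow> s = t'))
                             \<longrightarrow> t' = t) \<and>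
                      L g a b = ereal t))))"

definition periodic_stationary :: "'a measure \<Rightarrow> ('a \<Rightarrow> real \<Rightarrow> real) \<Rightarrow> bool" where
  "periodic_stationary M X \<longleftrightarrow>
     prob_space M \<and> (\<forall>\<omega>\<in>space M. X \<omega> \<in> Hper) \<and> X \<in> measurable M path_space \<and>
     (\<forall>c. distr M path_space (\<lambda>\<omega>. shift c (X \<omega>)) = distr M path_space X)"

text \<open>I^M_T: laws of L(X,[0,T]); the sample space is taken canonical (path space type).\<close>
definition I_M :: "real \<Rightarrow> ereal measure set" where
  "I_M T = {distr M borel (\<lambda>\<omega>. L (X \<omega>) 0 T) | (M :: (real \<Rightarrow> real) measure) X L.
              periodic_stationary M X \<and> intrinsic_location L \<and> first_time L}"

definition has_density_on :: "real \<Rightarrow> ereal measure \<Rightarrow> (real \<Rightarrow> real) \<Rightarrow> bool" where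
  "has_density_on T N f \<longleftrightarrow>
     (\<forall>A\<in>sets lborel. A \<subseteq> {0<..<T} \<longrightarrow>
        emeasure N (ereal ` A) = (\<integral>\<^sup>+x. indicator A x * ennreal (f x) \<partial>lborel))"

definition A_M :: "real \<Rightarrow> ereal measure set" where
  "A_M T = {N. sets N = sets (borel :: ereal measure) \<and> prob_space N \<and>
              emeasure N (UNIV - (ereal ` {0..T} \<union> {\<infinity>})) = 0 \<and>
              (\<exists>h. has_density_on T N h \<and>
                   (\<forall>x\<in>{0<..<T}. 0 \<le> h x) \<and>
                   (\<forall>x y. 0 < x \<longrightarrow> x \<le> y \<longrightarrow> y < T \<longrightarrow> h y \<le> h x) \<and>
                   (\<forall>x\<in>{0<..<T}. continuous (at_right x) h \<and> (\<exists>l. (h \<longlongrightarrow> l) (at_left x))))}"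

definition in_d :: "real \<Rightarrow> (real \<Rightarrow> real) \<Rightarrow> ereal measure set \<Rightarrow> bool" where
  "in_d T f A \<longleftrightarrow> (\<exists>N\<in>A. has_density_on T N f)"

end

theory Submission
  imports Defs
begin

text \<open>The first zero of a path in an interval is a first-time intrinsic location functional.
  If a 1-periodic function has its zeros in (0, 1] cutting the circle into gaps
  \<open>l\<^sub>1, \<dots>, l\<^sub>n \<le> T\<close> and is shifted by a phase uniform on (0, 1], then the first zero
  in [0, T] is the right end of the gap containing the phase, so its law has density
  \<open>#{i. l\<^sub>i > x}\<close> on (0, T); the random phase also makes the process stationary.
  Mixing such configurations over a second uniform parameter, with complementary pairs of gaps
  \<open>t b\<close> and \<open>(1 - t) b\<close> and one pair filling the remainder of [0, 1], makes the averaged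
  count equal to \<open>c (b - x)\<close> for \<open>x < b\<close> and 0 beyond \<open>b\<close>; the configurations that carry
  the missing mass \<open>1 - c b\<^sup>2 / 2\<close> have no zeros, so there the first zero is \<open>\<infinity>\<close>.\<close>

lemma shift_in_Hper: "g \<in> Hper \<Longrightarrow> shift c g \<in> Hper"
  unfolding Hper_def shift_def
  by (auto simp: ac_simps intro!: continuous_on_compose2[of UNIV g] continuous_intros)
     (metis add.assoc add.commute)

lemma Hper_add_of_int:
  assumes "g \<in> Hper"
  shows "g (x + of_int k) = g x"
proof -
  have step: "g (y + 1) = g y" for y
    using assms by (simp add: Hper_def)
  have nat_step: "g (y + real m) = g y" for y m
    by (induction m arbitrary: y) (use step in \<open>auto simp: add.assoc[symmetric]\<close>)
  show ?thesis
  proof (cases "0 \<le> k")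
    case True
    then show ?thesis using nat_step[of x "nat k"] by simp
  next
    case False
    then show ?thesis using nat_step[of "x + of_int k" "nat (- k)"] by simp
  qed
qed

lemma Hper_const: "(\<lambda>_. c) \<in> Hper"
  unfolding Hper_def by auto

definition zeros :: "(real \<Rightarrow> real) \<Rightarrow> real set" where
  "zeros g = {t. g t = 0}"

definition first_zero :: "(real \<Rightarrow> real) \<Rightarrow> real \<Rightarrow> real \<Rightarrow> ereal" where
  "first_zero g a b = (if zeros g \<inter> {a..b} = {} then \<infinity> else ereal (Inf (zeros g \<inter> {a..b})))"

lemma zeros_shift: "zeros (shift c g) = (\<lambda>t. t - c) ` zeros g"
  unfolding zeros_def shift_def by (auto simp: image_iff intro!: exI[where x="_ + c"])

lemma closed_zeros: "g \<in> Hper \<Longrightarrow> closed (zeros g)"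
  unfolding zeros_def Hper_def by (auto intro!: closed_Collect_eq continuous_intros)

lemma first_zero_eqI:
  assumes "t \<in> zeros g" "a \<le> t" "t \<le> b" "\<And>s. s \<in> zeros g \<Longrightarrow> a \<le> s \<Longrightarrow> s < t \<Longrightarrow> False"
  shows "first_zero g a b = ereal t"
proof -
  have "Inf (zeros g \<inter> {a..b}) = t"
    using assms by (intro cInf_eq_minimum) (auto simp: not_less[symmetric])
  then show ?thesis
    using assms unfolding first_zero_def by auto
qed

lemma first_zero_cases:
  assumes "g \<in> Hper"
  obtains "zeros g \<inter> {a..b} = {}" "first_zero g a b = \<infinity>"
  | t where "t \<in> zeros g \<inter> {a..b}" "\<And>s. s \<in> zeros g \<inter> {a..b} \<Longrightarrow> t \<le> s"
      "first_zero g a b = ereal t"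
proof (cases "zeros g \<inter> {a..b} = {}")
  case True
  then show ?thesis using that(1) by (simp add: first_zero_def)
next
  case False
  have bdd: "bdd_below (zeros g \<inter> {a..b})"
    by (auto intro: bdd_belowI[where m=a])
  have "Inf (zeros g \<inter> {a..b}) \<in> zeros g \<inter> {a..b}"
    using closed_zeros[OF assms] by (intro closed_contains_Inf[OF False bdd]) auto
  then show ?thesis
    using False by (intro that(2)) (auto intro: cInf_lower[OF _ bdd] simp: first_zero_def)
qed

lemma first_time_first_zero: "first_time first_zero"
  unfolding first_time_def
proof (intro exI[where x=zeros] exI[where x="\<lambda>g s t. t \<le> s"] conjI ballI allI impI)
  fix g c
  show "zeros g = (\<lambda>t. t + c) ` zeros (shift c g)"
    unfolding zeros_shift by (auto simp: image_image)
next
  fix g a b assume g: "g \<in> Hper"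
  let ?Z = "zeros g \<inter> {a..b}"
  show "if ?Z = {} then first_zero g a b = \<infinity>
    else \<exists>t. (t \<in> ?Z \<and> (\<forall>s\<in>?Z. s \<le> t \<longrightarrow> s = t)) \<and>
      (\<forall>t'. t' \<in> ?Z \<and> (\<forall>s\<in>?Z. s \<le> t' \<longrightarrow> s = t') \<longrightarrow> t' = t) \<and> first_zero g a b = ereal t"
  proof (cases rule: first_zero_cases[OF g, of a b])
    case (2 t)
    then have "?Z \<noteq> {}" by blast
    then show ?thesis unfolding if_not_P[OF \<open>?Z \<noteq> {}\<close>]
    proof (intro exI[of _ t] conjI ballI allI impI)
      fix t' assume "t' \<in> ?Z \<and> (\<forall>s\<in>?Z. s \<le> t' \<longrightarrow> s = t')"
      then show "t' = t" using 2 by blast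
    next
      fix s assume "s \<in> ?Z" "s \<le> t"
      then show "s = t" using 2(2)[of s] by simp
    qed (use 2 in auto)
  qed simp
qed auto

lemma exists_zero_iff_rational_approx:
  assumes g: "g \<in> Hper" and "a \<le> m"
  shows "(\<exists>t\<in>{a..m}. g t = 0) \<longleftrightarrow>
    (\<forall>n::nat. \<exists>q\<in>insert a (\<rat> \<inter> {a..m}). \<bar>g q\<bar> < 1 / Suc n)"
  (is "_ \<longleftrightarrow> (\<forall>n. \<exists>q\<in>?D. _)")
proof
  have cont: "continuous_on UNIV g"
    using g by (simp add: Hper_def)
  assume "\<exists>t\<in>{a..m}. g t = 0"
  then obtain t where t: "t \<in> {a..m}" "g t = 0" by auto
  show "\<forall>n::nat. \<exists>q\<in>?D. \<bar>g q\<bar> < 1 / Suc n"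
  proof
    fix n :: nat
    obtain d where d: "d > 0" "\<And>y. dist y t < d \<Longrightarrow> dist (g y) (g t) < 1 / Suc n"
      using cont unfolding continuous_on_eq_continuous_at[OF open_UNIV] continuous_at_eps_delta
      by (metis UNIV_I of_nat_0_less_iff zero_less_Suc divide_pos_pos zero_less_one)
    show "\<exists>q\<in>?D. \<bar>g q\<bar> < 1 / Suc n"
    proof (cases "t = a")
      case True
      then show ?thesis using d t by auto
    next
      case False
      then obtain q where "q \<in> \<rat>" "max a (t - d) < q" "q < t"
        using t d Rats_dense_in_real[of "max a (t - d)" t] by auto
      then show ?thesis using d(2)[of q] t by (auto simp: dist_real_def intro!: bexI[of _ q])
    qed
  qed
next
  assume approx: "\<forall>n::nat. \<exists>q\<in>?D. \<bar>g q\<bar> < 1 / Suc n"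
  have cont: "continuous_on {a..m} (\<lambda>x. \<bar>g x\<bar>)"
    using g by (auto simp: Hper_def intro!: continuous_intros continuous_on_subset[of UNIV g])
  obtain x where x: "x \<in> {a..m}" "\<And>y. y \<in> {a..m} \<Longrightarrow> \<bar>g x\<bar> \<le> \<bar>g y\<bar>"
    using continuous_attains_inf[OF compact_Icc _ cont] \<open>a \<le> m\<close> by auto
  have "g x = 0"
  proof (rule ccontr)
    assume "g x \<noteq> 0"
    then obtain n :: nat where n: "1 / Suc n < \<bar>g x\<bar>"
      by (metis nat_approx_posE zero_less_abs_iff)
    obtain q where "q \<in> ?D" "\<bar>g q\<bar> < 1 / Suc n"
      using approx by blast
    then show False using x(2)[of q] n \<open>a \<le> m\<close> by auto
  qed
  then show "\<exists>t\<in>{a..m}. g t = 0" using x by auto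
qed

lemma space_path_space: "space path_space = UNIV"
  by (simp add: path_space_def space_PiM)

lemma measurable_into_path_space:
  assumes "\<And>y. (\<lambda>w. F w y) \<in> borel_measurable N"
  shows "F \<in> measurable N path_space"
  unfolding path_space_def by (rule measurable_PiM_single') (use assms in auto)

lemma sets_exists_zero:
  "{g \<in> Hper. \<exists>t\<in>{a..m}. g t = 0} \<in> sets (restrict_space path_space Hper)"
proof (cases "a \<le> m")
  case True
  define D where "D = insert a (\<rat> \<inter> {a..m})"
  have "countable D"
    unfolding D_def by (auto intro: countable_rat countable_subset[of _ \<rat>])
  moreover have [measurable]: "(\<lambda>g. g q) \<in> borel_measurable path_space" for q
    unfolding path_space_def by simp
  ultimately have "Measurable.pred path_space (\<lambda>g. \<forall>n::nat. \<exists>q\<in>D. \<bar>g q\<bar> < 1 / Suc n)"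
    by measurable
  then have "Measurable.pred (restrict_space path_space Hper) (\<lambda>g. \<forall>n::nat. \<exists>q\<in>D. \<bar>g q\<bar> < 1 / Suc n)"
    by (rule measurable_restrict_space1)
  moreover have "{g \<in> Hper. \<exists>t\<in>{a..m}. g t = 0} =
      {g \<in> space (restrict_space path_space Hper). \<forall>n::nat. \<exists>q\<in>D. \<bar>g q\<bar> < 1 / Suc n}"
    using exists_zero_iff_rational_approx[OF _ True]
    by (auto simp: D_def space_restrict_space space_path_space)
  ultimately show ?thesis by simp
qed simp

lemma first_zero_less_iff:
  assumes g: "g \<in> Hper"
  shows "first_zero g a b < ereal r \<longleftrightarrow> (\<exists>n::nat. \<exists>t\<in>{a..min b (r - 1 / Suc n)}. g t = 0)"
proof
  assume less: "first_zero g a b < ereal r"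
  then obtain t where t: "t \<in> zeros g \<inter> {a..b}" "first_zero g a b = ereal t"
    by (cases rule: first_zero_cases[OF g, of a b]) auto
  have "t < r"
    using less t by simp
  then obtain n :: nat where "1 / Suc n < r - t"
    by (metis diff_gt_0_iff_gt nat_approx_posE)
  then show "\<exists>n::nat. \<exists>t\<in>{a..min b (r - 1 / Suc n)}. g t = 0"
    using t by (intro exI[of _ n] bexI[of _ t]) (auto simp: zeros_def)
next
  assume "\<exists>n::nat. \<exists>t\<in>{a..min b (r - 1 / Suc n)}. g t = 0"
  then obtain n :: nat and t where t: "t \<in> {a..min b (r - 1 / Suc n)}" "g t = 0" by auto
  then have "t < r"
    by (smt (verit, best) atLeastAtMost_iff divide_pos_pos min.boundedE of_nat_0_less_iff zero_less_Suc)
  moreover have "t \<in> zeros g \<inter> {a..b}"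
    using t by (auto simp: zeros_def)
  ultimately show "first_zero g a b < ereal r"
    by (cases rule: first_zero_cases[OF g, of a b]) fastforce+
qed

lemma measurable_first_zero:
  "(\<lambda>g. first_zero g a b) \<in> borel_measurable (restrict_space path_space Hper)"
  unfolding borel_measurable_ereal_iff_Iio
proof
  fix y :: ereal
  have space: "space (restrict_space path_space Hper) = Hper"
    by (simp add: space_restrict_space space_path_space)
  show "(\<lambda>g. first_zero g a b) -` {..<y} \<inter> space (restrict_space path_space Hper)
      \<in> sets (restrict_space path_space Hper)"
  proof (cases y)
    case (real r)
    have "(\<lambda>g. first_zero g a b) -` {..<y} \<inter> Hper =
        (\<Union>n::nat. {g \<in> Hper. \<exists>t\<in>{a..min b (r - 1 / Suc n)}. g t = 0})"
      using first_zero_less_iff[of _ a b r] unfolding real by blast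
    then show ?thesis
      using sets_exists_zero unfolding space by auto
  next
    case PInf
    have "(\<lambda>g. first_zero g a b) -` {..<y} \<inter> Hper = {g \<in> Hper. \<exists>t\<in>{a..b}. g t = 0}"
      unfolding PInf first_zero_def
      by (auto simp: zeros_def disjoint_iff split: if_splits) (metis atLeastAtMost_iff)
    then show ?thesis
      using sets_exists_zero unfolding space by auto
  qed (simp add: lessThan_def)
qed

lemma first_zero_shift:
  assumes g: "g \<in> Hper"
  shows "first_zero g a b = first_zero (shift c g) (a - c) (b - c) + ereal c"
proof -
  have zeros_shift_iff: "s \<in> zeros (shift c g) \<longleftrightarrow> s + c \<in> zeros g" for s
    unfolding zeros_shift by force
  show ?thesis
  proof (cases rule: first_zero_cases[OF g, of a b])
    case 1
    then have "zeros (shift c g) \<inter> {a - c..b - c} = {}"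
      using zeros_shift_iff by fastforce
    then show ?thesis using 1 by (simp add: first_zero_def)
  next
    case (2 t)
    have "first_zero (shift c g) (a - c) (b - c) = ereal (t - c)"
    proof (rule first_zero_eqI)
      fix s assume "s \<in> zeros (shift c g)" "a - c \<le> s" "s < t - c"
      then show False
        using 2(2)[of "s + c"] 2(1) by (simp add: zeros_shift_iff)
    qed (use 2(1) in \<open>auto simp: zeros_shift_iff\<close>)
    then show ?thesis using 2 by simp
  qed
qed

lemma intrinsic_location_first_zero: "intrinsic_location first_zero"
  unfolding intrinsic_location_def
proof (intro conjI allI impI ballI)
  fix a b :: real
  show "(\<lambda>g. first_zero g a b) \<in> borel_measurable (restrict_space path_space Hper)"
    by (rule measurable_first_zero)
next
  fix g and a b :: real assume g: "g \<in> Hper"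
  show "first_zero g a b \<in> ereal ` {a..b} \<union> {\<infinity>}"
    by (cases rule: first_zero_cases[OF g, of a b]) auto
next
  fix g and a b c :: real assume "g \<in> Hper"
  then show "first_zero g a b = first_zero (shift c g) (a - c) (b - c) + ereal c"
    by (rule first_zero_shift)
next
  fix g and a1 b1 a2 b2 :: real assume g: "g \<in> Hper"
    and "a1 \<le> a2" "b2 \<le> b1" "first_zero g a1 b1 \<in> ereal ` {a2..b2}"
  then obtain t where t: "t \<in> zeros g \<inter> {a1..b1}" "\<And>s. s \<in> zeros g \<inter> {a1..b1} \<Longrightarrow> t \<le> s"
    "first_zero g a1 b1 = ereal t" "t \<in> {a2..b2}"
    by (cases rule: first_zero_cases[OF g, of a1 b1]) auto
  then have "first_zero g a2 b2 = ereal t"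
    using \<open>a1 \<le> a2\<close> \<open>b2 \<le> b1\<close> by (intro first_zero_eqI) force+
  then show "first_zero g a2 b2 = first_zero g a1 b1" using t by simp
next
  fix g and a1 b1 a2 b2 :: real
  assume "a1 \<le> a2" "b2 \<le> b1" "first_zero g a2 b2 \<noteq> \<infinity>"
  then show "first_zero g a1 b1 \<noteq> \<infinity>"
    unfolding first_zero_def by (auto split: if_splits)
qed

definition sine_product :: "(nat \<Rightarrow> real) \<Rightarrow> nat \<Rightarrow> real \<Rightarrow> real" where
  "sine_product p n y = (\<Prod>i<n. (sin (pi * (y - p i)))\<^sup>2)"

lemma sine_product_in_Hper: "sine_product p n \<in> Hper"
  unfolding Hper_def
proof (intro CollectI conjI allI)
  show "continuous_on UNIV (sine_product p n)"
    unfolding sine_product_def by (intro continuous_intros)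
  fix x
  have "pi * (x + 1 - p i) = pi * (x - p i) + pi" for i
    by (simp add: algebra_simps)
  then show "sine_product p n (x + 1) = sine_product p n x"
    unfolding sine_product_def by (simp add: sin_add)
qed

lemma zeros_sine_product: "zeros (sine_product p n) = {x. \<exists>i<n. \<exists>k::int. x = p i + k}"
proof -
  have "sin (pi * (x - p i)) = 0 \<longleftrightarrow> (\<exists>k::int. x = p i + k)" for x i
  proof -
    have "pi * (x - p i) = of_int k * pi \<longleftrightarrow> x = p i + k" for k :: int
    proof -
      have "pi * (x - p i) = of_int k * pi \<longleftrightarrow> pi * (x - p i - of_int k) = 0"
        by (simp add: algebra_simps)
      then show ?thesis by auto
    qed
    then show ?thesis
      unfolding sin_zero_iff_int2 by auto
  qed
  then show ?thesis
    unfolding zeros_def sine_product_def by auto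
qed

lemma emeasure_lborel_vimage_isometry:
  fixes t c :: real
  assumes "\<bar>c\<bar> = 1" "B \<in> sets borel"
  shows "emeasure lborel ((\<lambda>x. t + c * x) -` B) = emeasure lborel B"
proof -
  have "distr lborel borel (\<lambda>x. t + c * x) = lborel"
    using lborel_real_affine[of c t] assms(1) by (auto simp: density_1)
  then show ?thesis
    using emeasure_distr[of "\<lambda>x. t + c * x" lborel borel B] assms(2) by simp
qed

locale gap_configuration =
  fixes l :: "nat \<Rightarrow> real" and n :: nat and T :: real and g :: "real \<Rightarrow> real"
  assumes gap_nonneg: "\<And>i. i < n \<Longrightarrow> 0 \<le> l i"
    and gap_le: "\<And>i. i < n \<Longrightarrow> l i \<le> T"
    and gap_sum: "(\<Sum>i<n. l i) = 1"
    and periodic: "g \<in> Hper"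
    and zeros_eq: "zeros g = {x. \<exists>i<n. \<exists>k::int. x = (\<Sum>j<i. l j) + k}"
begin

definition point :: "nat \<Rightarrow> real" where
  "point i = (\<Sum>j<i. l j)"

lemma point_0: "point 0 = 0" and point_n: "point n = 1" and point_Suc: "point (Suc i) = point i + l i"
  using gap_sum by (simp_all add: point_def)

lemma point_mono: "j \<le> k \<Longrightarrow> k \<le> n \<Longrightarrow> point j \<le> point k"
  unfolding point_def by (intro sum_mono2) (auto intro: gap_nonneg)

lemma point_bounds: "j \<le> n \<Longrightarrow> 0 \<le> point j \<and> point j \<le> 1"
  using point_mono[of 0 j] point_mono[of j n] point_0 point_n by auto

lemma point_in_zeros:
  assumes "i \<le> n"
  shows "point i \<in> zeros g"
proof (cases "i = n")
  case True
  have "0 < n" using gap_sum by (cases n) auto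
  then show ?thesis
    unfolding zeros_eq True point_n by (intro CollectI exI[of _ 0] exI[of _ 1]) simp
next
  case False
  then show ?thesis
    using assms unfolding zeros_eq point_def by (intro CollectI exI[of _ i] exI[of _ 0]) auto
qed

lemma first_zero_shift_phase:
  assumes i: "i < n" and \<theta>: "point i < \<theta>" "\<theta> \<le> point (Suc i)"
  shows "first_zero (shift \<theta> g) 0 T = ereal (point (Suc i) - \<theta>)"
proof (rule first_zero_eqI)
  show "point (Suc i) - \<theta> \<in> zeros (shift \<theta> g)"
    using point_in_zeros[of "Suc i"] i unfolding zeros_shift by auto
  show "0 \<le> point (Suc i) - \<theta>" "point (Suc i) - \<theta> \<le> T"
    using \<theta> gap_le[OF i] by (auto simp: point_Suc)
  fix s assume s: "s \<in> zeros (shift \<theta> g)" "0 \<le> s" "s < point (Suc i) - \<theta>"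
  then have "s + \<theta> \<in> zeros g"
    unfolding zeros_shift by auto
  then obtain j and k :: int where j: "j < n" and "s + \<theta> = point j + k"
    unfolding zeros_eq point_def by blast
  then have between: "point i < point j + k" "point j + k < point (Suc i)"
    using s \<theta> by linarith+
  have bounds: "0 \<le> point j" "point j \<le> 1" "0 \<le> point i" "point (Suc i) \<le> 1"
    using point_bounds[of j] point_bounds[of i] point_bounds[of "Suc i"] i j by auto
  consider "k \<le> -1" | "k = 0" | "1 \<le> k" by linarith
  then show False
  proof cases
    case 2
    then show False
      using between i j point_mono[of j i] point_mono[of "Suc i" j] by (cases "j \<le> i") auto
  next
    case 1
    then have "real_of_int k \<le> -1" by simp
    then show False using between bounds by linarith
  next
    case 3
    then have "1 \<le> real_of_int k" by simp
    then show False using between bounds by linarith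
  qed
qed

lemma phase_cell:
  assumes "0 < \<theta>" "\<theta> \<le> 1"
  shows "\<exists>i<n. point i < \<theta> \<and> \<theta> \<le> point (Suc i)"
proof -
  have "\<exists>i<m. point i < \<theta> \<and> \<theta> \<le> point (Suc i)" if "\<theta> \<le> point m" for m
    using that
  proof (induction m)
    case (Suc m)
    then show ?case
      by (cases "\<theta> \<le> point m") (auto intro: less_SucI)
  qed (use assms point_0 in simp)
  then show ?thesis
    using assms point_n by simp
qed

lemma phase_first_zero_in_iff:
  "(\<theta> \<in> {0<..1} \<and> first_zero (shift \<theta> g) 0 T \<in> ereal ` A) \<longleftrightarrow>
    (\<exists>i<n. point i < \<theta> \<and> \<theta> \<le> point (Suc i) \<and> point (Suc i) - \<theta> \<in> A)"
proof
  assume "\<theta> \<in> {0<..1} \<and> first_zero (shift \<theta> g) 0 T \<in> ereal ` A"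
  moreover obtain i where "i < n" "point i < \<theta>" "\<theta> \<le> point (Suc i)"
    using phase_cell calculation by auto
  ultimately show "\<exists>i<n. point i < \<theta> \<and> \<theta> \<le> point (Suc i) \<and> point (Suc i) - \<theta> \<in> A"
    using first_zero_shift_phase by auto
next
  assume "\<exists>i<n. point i < \<theta> \<and> \<theta> \<le> point (Suc i) \<and> point (Suc i) - \<theta> \<in> A"
  then obtain i where "i < n" "point i < \<theta>" "\<theta> \<le> point (Suc i)" "point (Suc i) - \<theta> \<in> A"
    by blast
  moreover have "0 < \<theta>" "\<theta> \<le> 1"
    using calculation point_bounds[of i] point_bounds[of "Suc i"] by auto
  ultimately show "\<theta> \<in> {0<..1} \<and> first_zero (shift \<theta> g) 0 T \<in> ereal ` A"
    using first_zero_shift_phase by auto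
qed

lemma emeasure_phase_first_zero:
  assumes A: "A \<in> sets borel" "A \<subseteq> {0<..}"
  shows "emeasure lborel {\<theta>\<in>{0<..1}. first_zero (shift \<theta> g) 0 T \<in> ereal ` A} =
    (\<Sum>i<n. emeasure lborel (A \<inter> {..< l i}))"
proof -
  define E where "E i = {\<theta>. point i < \<theta> \<and> \<theta> \<le> point (Suc i) \<and> point (Suc i) - \<theta> \<in> A}" for i
  have "{\<theta>\<in>{0<..1}. first_zero (shift \<theta> g) 0 T \<in> ereal ` A} = (\<Union>i<n. E i)"
    using phase_first_zero_in_iff by (auto simp: E_def)
  moreover have "disjoint_family_on E {..<n}"
    unfolding disjoint_family_on_def
  proof (intro ballI impI)
    fix i j assume ij: "i \<in> {..<n}" "j \<in> {..<n}" "i \<noteq> j"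
    have "E i \<inter> E j = {}" if "i < j" "j < n" for i j
      using that point_mono[of "Suc i" j] by (auto simp: E_def)
    then show "E i \<inter> E j = {}"
      using ij by (metis Int_commute lessThan_iff linorder_neqE_nat)
  qed
  moreover have E_vimage: "E i = (\<lambda>x. point (Suc i) + (-1) * x) -` (A \<inter> {..< l i})" for i
    using A(2) by (auto simp: E_def point_Suc)
  moreover have "E i \<in> sets lborel" for i
  proof -
    have "(\<lambda>x. point (Suc i) + (-1) * x) -` (A \<inter> {..< l i}) \<inter> space borel \<in> sets borel"
      using A(1) by (intro measurable_sets[of _ borel borel]) auto
    then show ?thesis unfolding E_vimage by simp
  qed
  ultimately have "emeasure lborel {\<theta>\<in>{0<..1}. first_zero (shift \<theta> g) 0 T \<in> ereal ` A} =
      (\<Sum>i<n. emeasure lborel (E i))"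
    by (subst sum_emeasure) auto
  also have "\<dots> = (\<Sum>i<n. emeasure lborel (A \<inter> {..< l i}))"
    unfolding E_vimage using A(1) by (intro sum.cong refl emeasure_lborel_vimage_isometry) auto
  finally show ?thesis .
qed

end

definition wrap :: "real \<Rightarrow> real" where
  "wrap y = y - of_int \<lceil>y\<rceil> + 1"

lemma wrap_add_of_int: "wrap (y + of_int k) = wrap y"
  unfolding wrap_def by simp

lemma wrap_bounds: "0 < wrap y" "wrap y \<le> 1"
  unfolding wrap_def by linarith+

lemma wrap_eq_diff_of_int: "wrap y = y - of_int (\<lceil>y\<rceil> - 1)"
  unfolding wrap_def by simp

lemma wrap_add_unit:
  assumes "0 < z" "z \<le> 2"
  shows "wrap z = (if z \<le> 1 then z else z - 1)"
proof -
  have "\<lceil>z\<rceil> = (if z \<le> 1 then 1 else 2)"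
    using assms by (simp add: ceiling_eq_iff)
  then show ?thesis
    unfolding wrap_def by simp
qed

lemma wrap_add_wrap: "wrap (\<theta> + wrap d) = wrap (\<theta> + d)"
  using wrap_add_of_int[of "\<theta> + wrap d" "\<lceil>d\<rceil> - 1"] by (simp add: wrap_eq_diff_of_int[of d])

lemma unit_interval_inter_vimage_wrap:
  "{0<..1} \<inter> (\<lambda>\<theta>. wrap (\<theta> + d)) -` B =
    (\<lambda>x. wrap d + x) -` (B \<inter> {wrap d<..1}) \<union> (\<lambda>x. (wrap d - 1) + x) -` (B \<inter> {0<..wrap d})"
proof -
  have "\<theta> \<in> {0<..1} \<inter> (\<lambda>\<theta>. wrap (\<theta> + d)) -` B \<longleftrightarrow>
      \<theta> \<in> (\<lambda>x. wrap d + x) -` (B \<inter> {wrap d<..1}) \<union> (\<lambda>x. (wrap d - 1) + x) -` (B \<inter> {0<..wrap d})"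
    for \<theta>
  proof (cases "0 < \<theta> \<and> \<theta> \<le> 1")
    case True
    then have "wrap (\<theta> + d) = (if \<theta> + wrap d \<le> 1 then wrap d + \<theta> else (wrap d - 1) + \<theta>)"
      using wrap_bounds[of d] wrap_add_unit[of "\<theta> + wrap d"] by (simp add: wrap_add_wrap)
    then show ?thesis
      using True wrap_bounds[of d] by (simp add: add.commute[of \<theta>])
  qed (use wrap_bounds[of d] in auto)
  then show ?thesis
    by blast
qed

lemma measurable_wrap[measurable]: "wrap \<in> borel_measurable borel"
  unfolding wrap_def by measurable

definition uniform_phase :: "real measure" where
  "uniform_phase = uniform_measure lborel {0<..1}"

lemma sets_uniform_phase[simp, measurable_cong]: "sets uniform_phase = sets borel"
  by (simp add: uniform_phase_def)

lemma space_uniform_phase[simp]: "space uniform_phase = UNIV"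
  by (simp add: uniform_phase_def)

lemma prob_space_uniform_phase: "prob_space uniform_phase"
  unfolding uniform_phase_def by (intro prob_space_uniform_measure) auto

lemma emeasure_uniform_phase:
  "B \<in> sets borel \<Longrightarrow> emeasure uniform_phase B = emeasure lborel ({0<..1} \<inter> B)"
  by (simp add: uniform_phase_def emeasure_lborel_Ioc divide_ennreal_def)

lemma emeasure_lborel_vimage_translation:
  fixes t :: real
  shows "B \<in> sets borel \<Longrightarrow> emeasure lborel ((\<lambda>x. t + x) -` B) = emeasure lborel B"
  using emeasure_lborel_vimage_isometry[of 1 B t] by simp

lemma distr_uniform_phase_wrap: "distr uniform_phase borel (\<lambda>\<theta>. wrap (\<theta> + d)) = uniform_phase"
proof (rule measure_eqI)
  fix B assume "B \<in> sets (distr uniform_phase borel (\<lambda>\<theta>. wrap (\<theta> + d)))"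
  then have B: "B \<in> sets borel" by simp
  define e where "e = wrap d"
  have e: "0 < e" "e \<le> 1"
    unfolding e_def by (rule wrap_bounds)+
  have preimage: "{0<..1} \<inter> (\<lambda>\<theta>. wrap (\<theta> + d)) -` B =
      (\<lambda>x. e + x) -` (B \<inter> {e<..1}) \<union> (\<lambda>x. (e - 1) + x) -` (B \<inter> {0<..e})"
    unfolding e_def by (rule unit_interval_inter_vimage_wrap)
  have "emeasure lborel ({0<..1} \<inter> (\<lambda>\<theta>. wrap (\<theta> + d)) -` B) =
      emeasure lborel ((\<lambda>x. e + x) -` (B \<inter> {e<..1})) + emeasure lborel ((\<lambda>x. (e - 1) + x) -` (B \<inter> {0<..e}))"
    unfolding preimage using B by (intro plus_emeasure[symmetric]) auto
  also have "\<dots> = emeasure lborel (B \<inter> {e<..1}) + emeasure lborel (B \<inter> {0<..e})"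
    using B by (subst (1 2) emeasure_lborel_vimage_translation) auto
  also have "\<dots> = emeasure lborel ((B \<inter> {e<..1}) \<union> (B \<inter> {0<..e}))"
    using B by (intro plus_emeasure) auto
  also have "(B \<inter> {e<..1}) \<union> (B \<inter> {0<..e}) = {0<..1} \<inter> B"
    using e by auto
  finally have "emeasure lborel ({0<..1} \<inter> (\<lambda>\<theta>. wrap (\<theta> + d)) -` B) = emeasure lborel ({0<..1} \<inter> B)" .
  moreover have "(\<lambda>\<theta>. wrap (\<theta> + d)) -` B \<in> sets borel"
    using measurable_sets[of "\<lambda>\<theta>. wrap (\<theta> + d)" borel borel B] B by simp
  ultimately show "emeasure (distr uniform_phase borel (\<lambda>\<theta>. wrap (\<theta> + d))) B = emeasure uniform_phase B"
    using B by (simp add: emeasure_distr emeasure_uniform_phase)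
qed simp

text \<open>The definition of I_M fixes the sample space to be the path space, so a pair
  (configuration, phase) is stored in the coordinates 0 and 1 of a path.\<close>

definition encode_pair :: "real \<times> real \<Rightarrow> real \<Rightarrow> real" where
  "encode_pair p = (\<lambda>i. if i = 0 then fst p else snd p)"

locale random_phase =
  fixes S :: "real measure" and G :: "real \<Rightarrow> real \<Rightarrow> real"
  assumes prob_space_S: "prob_space S" and sets_S[measurable_cong]: "sets S = sets borel"
    and G_in_Hper: "\<And>s. G s \<in> Hper"
    and measurable_G: "(\<lambda>p. G (fst p) (snd p)) \<in> borel_measurable (borel \<Otimes>\<^sub>M borel)"
begin

definition sample_measure :: "(real \<Rightarrow> real) measure" where
  "sample_measure = distr (S \<Otimes>\<^sub>M uniform_phase) path_space encode_pair"

definition process :: "(real \<Rightarrow> real) \<Rightarrow> real \<Rightarrow> real" where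
  "process w = shift (w 1) (G (w 0))"

lemma space_S[simp]: "space S = UNIV"
  using sets_eq_imp_space_eq[OF sets_S] by simp

lemma measurable_G_comp[measurable]:
  "f \<in> borel_measurable N \<Longrightarrow> h \<in> borel_measurable N \<Longrightarrow> (\<lambda>w. G (f w) (h w)) \<in> borel_measurable N"
  using measurable_compose[OF measurable_Pair measurable_G, of f N h] by simp

lemma sets_pair: "sets (S \<Otimes>\<^sub>M uniform_phase) = sets (borel \<Otimes>\<^sub>M borel)"
  by (rule sets_pair_measure_cong) (simp_all add: sets_S)

lemma measurable_encode_pair: "encode_pair \<in> measurable (S \<Otimes>\<^sub>M uniform_phase) path_space"
  unfolding measurable_cong_sets[OF sets_pair refl]
  by (rule measurable_into_path_space) (simp add: encode_pair_def)

lemma sets_sample_measure[measurable_cong]: "sets sample_measure = sets path_space"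
  by (simp add: sample_measure_def)

lemma measurable_shift_process: "(\<lambda>w. shift d (process w)) \<in> measurable sample_measure path_space"
proof -
  have [measurable]: "(\<lambda>w. w i) \<in> borel_measurable path_space" for i
    unfolding path_space_def by simp
  show ?thesis
    unfolding measurable_cong_sets[OF sets_sample_measure refl]
    by (rule measurable_into_path_space) (simp add: process_def shift_def)
qed

lemma measurable_process: "process \<in> measurable sample_measure path_space"
  using measurable_shift_process[of 0] unfolding process_def shift_def by simp

lemma process_encode_pair: "process (encode_pair (s, \<theta>)) = shift \<theta> (G s)"
  by (simp add: process_def encode_pair_def)

lemma shift_process_encode_pair:
  "shift d (process (encode_pair (s, \<theta>))) = process (encode_pair (s, wrap (\<theta> + d)))"
proof -
  have "G s (y + d + \<theta>) = G s (y + wrap (\<theta> + d))" for y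
    using Hper_add_of_int[OF G_in_Hper, of s "y + wrap (\<theta> + d)" "\<lceil>\<theta> + d\<rceil> - 1"]
    by (simp add: wrap_eq_diff_of_int ac_simps)
  then show ?thesis
    by (simp add: process_encode_pair shift_def fun_eq_iff ac_simps)
qed

lemma distr_pair_wrap:
  "distr (S \<Otimes>\<^sub>M uniform_phase) (borel \<Otimes>\<^sub>M borel) (\<lambda>(s, \<theta>). (s, wrap (\<theta> + d))) = S \<Otimes>\<^sub>M uniform_phase"
proof -
  have "distr S borel (\<lambda>s. s) \<Otimes>\<^sub>M distr uniform_phase borel (\<lambda>\<theta>. wrap (\<theta> + d)) =
      distr (S \<Otimes>\<^sub>M uniform_phase) (borel \<Otimes>\<^sub>M borel) (\<lambda>(s, \<theta>). (s, wrap (\<theta> + d)))"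
    using prob_space_uniform_phase
    by (intro pair_measure_distr) (simp_all add: distr_uniform_phase_wrap prob_space_imp_sigma_finite)
  moreover have "distr S borel (\<lambda>s. s) = S"
    by (rule distr_id2) (simp add: sets_S)
  ultimately show ?thesis
    by (simp add: distr_uniform_phase_wrap)
qed

lemma periodic_stationary_process: "periodic_stationary sample_measure process"
  unfolding periodic_stationary_def
proof (intro conjI ballI allI)
  show "prob_space sample_measure"
    unfolding sample_measure_def
    using prob_space_pair[OF prob_space_S prob_space_uniform_phase] measurable_encode_pair
    by (rule prob_space.prob_space_distr)
  show "process w \<in> Hper" for w
    unfolding process_def by (intro shift_in_Hper G_in_Hper)
  show "process \<in> measurable sample_measure path_space"
    by (rule measurable_process)
  fix d
  have wrap_measurable: "(\<lambda>(s, \<theta>). (s, wrap (\<theta> + d))) \<in> measurable (S \<Otimes>\<^sub>M uniform_phase) (borel \<Otimes>\<^sub>M borel)"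
    unfolding measurable_cong_sets[OF sets_pair refl] by measurable
  have encode_wrap_measurable:
    "encode_pair \<circ> (\<lambda>(s, \<theta>). (s, wrap (\<theta> + d))) \<in> measurable (S \<Otimes>\<^sub>M uniform_phase) path_space"
    by (rule measurable_comp[OF wrap_measurable])
       (simp add: measurable_encode_pair[unfolded measurable_cong_sets[OF sets_pair refl]])
  have "distr sample_measure path_space (\<lambda>w. shift d (process w)) =
      distr (S \<Otimes>\<^sub>M uniform_phase) path_space ((\<lambda>w. shift d (process w)) \<circ> encode_pair)"
    unfolding sample_measure_def
    using measurable_shift_process measurable_encode_pair
    by (intro distr_distr) (auto simp: measurable_cong_sets[OF sets_sample_measure refl] sample_measure_def)
  also have "(\<lambda>w. shift d (process w)) \<circ> encode_pair = process \<circ> (encode_pair \<circ> (\<lambda>(s, \<theta>). (s, wrap (\<theta> + d))))"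
    by (auto simp: fun_eq_iff shift_process_encode_pair)
  also have "distr (S \<Otimes>\<^sub>M uniform_phase) path_space \<dots> =
      distr (distr (S \<Otimes>\<^sub>M uniform_phase) path_space (encode_pair \<circ> (\<lambda>(s, \<theta>). (s, wrap (\<theta> + d))))) path_space process"
    using measurable_process encode_wrap_measurable
    by (intro distr_distr[symmetric]) (auto simp: measurable_cong_sets[OF sets_sample_measure refl])
  also have "distr (S \<Otimes>\<^sub>M uniform_phase) path_space (encode_pair \<circ> (\<lambda>(s, \<theta>). (s, wrap (\<theta> + d)))) =
      sample_measure"
    unfolding sample_measure_def
    using wrap_measurable measurable_encode_pair
    by (subst distr_distr[symmetric]) (auto simp: distr_pair_wrap measurable_cong_sets[OF sets_pair refl])
  finally show "distr sample_measure path_space (\<lambda>w. shift d (process w)) = distr sample_measure path_space process" .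
qed

lemma emeasure_law_first_zero:
  assumes B: "B \<in> sets borel"
  shows "emeasure (distr sample_measure borel (\<lambda>w. first_zero (process w) 0 T)) B =
    (\<integral>\<^sup>+ s. emeasure lborel {\<theta>\<in>{0<..1}. first_zero (shift \<theta> (G s)) 0 T \<in> B} \<partial>S)"
proof -
  let ?F = "\<lambda>p. first_zero (shift (snd p) (G (fst p))) 0 T"
  have "process \<in> measurable sample_measure (restrict_space path_space Hper)"
    using measurable_process G_in_Hper shift_in_Hper
    by (intro measurable_restrict_space2) (auto simp: process_def)
  from measurable_comp[OF this measurable_first_zero]
  have law_measurable: "(\<lambda>w. first_zero (process w) 0 T) \<in> borel_measurable path_space"
    by (simp add: o_def measurable_cong_sets[OF sets_sample_measure refl])
  then have F_measurable: "?F \<in> borel_measurable (S \<Otimes>\<^sub>M uniform_phase)"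
    using measurable_comp[OF measurable_encode_pair law_measurable]
    by (simp add: o_def process_encode_pair[symmetric] split_beta')
  define E where "E = ?F -` B \<inter> space (S \<Otimes>\<^sub>M uniform_phase)"
  have E: "E \<in> sets (S \<Otimes>\<^sub>M uniform_phase)"
    unfolding E_def using B by (intro measurable_sets[OF F_measurable]) auto
  have "distr sample_measure borel (\<lambda>w. first_zero (process w) 0 T) = distr (S \<Otimes>\<^sub>M uniform_phase) borel ?F"
    unfolding sample_measure_def using law_measurable measurable_encode_pair
    by (subst distr_distr) (auto simp: o_def process_encode_pair[symmetric] split_beta')
  then have "emeasure (distr sample_measure borel (\<lambda>w. first_zero (process w) 0 T)) B =
      emeasure (S \<Otimes>\<^sub>M uniform_phase) E"
    using F_measurable B by (simp add: emeasure_distr E_def)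
  also have "\<dots> = (\<integral>\<^sup>+ s. emeasure uniform_phase (Pair s -` E) \<partial>S)"
    using prob_space_uniform_phase E
    by (intro sigma_finite_measure.emeasure_pair_measure_alt) (auto simp: prob_space_imp_sigma_finite)
  also have "\<dots> = (\<integral>\<^sup>+ s. emeasure lborel {\<theta>\<in>{0<..1}. first_zero (shift \<theta> (G s)) 0 T \<in> B} \<partial>S)"
  proof (rule nn_integral_cong)
    fix s
    have "Pair s -` E \<in> sets borel"
      using E sets_pair by (auto intro: sets_Pair1)
    moreover have "{0<..1} \<inter> Pair s -` E = {\<theta>\<in>{0<..1}. first_zero (shift \<theta> (G s)) 0 T \<in> B}"
      by (auto simp: E_def space_pair_measure)
    ultimately show "emeasure uniform_phase (Pair s -` E) =
        emeasure lborel {\<theta>\<in>{0<..1}. first_zero (shift \<theta> (G s)) 0 T \<in> B}"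
      by (simp add: emeasure_uniform_phase)
  qed
  finally show ?thesis .
qed

end

definition unit_clamp :: "real \<Rightarrow> real" where
  "unit_clamp y = max 0 (min 1 y)"

lemma unit_clamp_nonneg: "0 \<le> unit_clamp y"
  by (simp add: unit_clamp_def)

lemma emeasure_lborel_Ico_max: "emeasure lborel {a..<e::real} = ennreal (max 0 (e - a))"
  by (cases "a \<le> e") auto

lemma emeasure_lborel_Ioo_max: "emeasure lborel {a<..<e::real} = ennreal (max 0 (e - a))"
  by (cases "a \<le> e") auto

lemma emeasure_lborel_Ico_inter_greater:
  "emeasure lborel {s::real. a \<le> s \<and> s < e \<and> z < s} = ennreal (max 0 (e - max a z))"
proof (cases "z < a")
  case True
  then have "{s::real. a \<le> s \<and> s < e \<and> z < s} = {a..<e}"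
    by auto
  then show ?thesis
    using True by (simp add: emeasure_lborel_Ico_max)
next
  case False
  then have "{s::real. a \<le> s \<and> s < e \<and> z < s} = {z<..<e}"
    by auto
  then show ?thesis
    using False by (simp add: emeasure_lborel_Ioo_max)
qed

lemma emeasure_lborel_Ico_inter_less:
  "emeasure lborel {s::real. a \<le> s \<and> s < e \<and> s < z} = ennreal (max 0 (min e z - a))"
proof -
  have "{s::real. a \<le> s \<and> s < e \<and> s < z} = {a..<min e z}"
    by auto
  then show ?thesis
    by (simp add: emeasure_lborel_Ico_max)
qed

lemma emeasure_affine_increasing_exceeds:
  assumes "0 \<le> h" and "h = 0 \<or> 0 < \<beta>"
  shows "emeasure lborel {s. lo \<le> s \<and> s < lo + h \<and> x < \<alpha> + \<beta> * ((s - lo) / h)} =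
    ennreal (h * unit_clamp ((\<alpha> + \<beta> - x) / \<beta>))"
proof (cases "h = 0")
  case False
  then have h: "0 < h" and \<beta>: "0 < \<beta>"
    using assms by auto
  define w where "w = (x - \<alpha>) / \<beta>"
  have "x < \<alpha> + \<beta> * ((s - lo) / h) \<longleftrightarrow> lo + h * w < s" for s
    using h \<beta> by (simp add: w_def field_simps)
  then have "{s. lo \<le> s \<and> s < lo + h \<and> x < \<alpha> + \<beta> * ((s - lo) / h)} =
      {s. lo \<le> s \<and> s < lo + h \<and> lo + h * w < s}"
    by auto
  moreover have "max 0 (lo + h - max lo (lo + h * w)) = h * unit_clamp (1 - w)"
  proof (cases "0 \<le> w")
    case True
    then show ?thesis
      using h by (cases "w \<le> 1") (auto simp: unit_clamp_def max_def min_def algebra_simps)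
  next
    case False
    then have "h * w < 0"
      using h by (simp add: mult_pos_neg)
    then show ?thesis
      using False h by (auto simp: unit_clamp_def max_def min_def algebra_simps)
  qed
  moreover have "(\<alpha> + \<beta> - x) / \<beta> = 1 - w"
    using \<beta> by (simp add: w_def field_simps)
  ultimately show ?thesis
    by (simp add: emeasure_lborel_Ico_inter_greater)
next
  case True
  then have empty: "{s. lo \<le> s \<and> s < lo + h \<and> x < \<alpha> + \<beta> * ((s - lo) / h)} = {}"
    by auto
  show ?thesis
    unfolding empty using True by simp
qed

lemma emeasure_affine_decreasing_exceeds:
  assumes "0 \<le> h" and "h = 0 \<or> 0 < \<beta>"
  shows "emeasure lborel {s. lo \<le> s \<and> s < lo + h \<and> x < \<alpha> - \<beta> * ((s - lo) / h)} =
    ennreal (h * unit_clamp ((\<alpha> - x) / \<beta>))"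
proof (cases "h = 0")
  case False
  then have h: "0 < h" and \<beta>: "0 < \<beta>"
    using assms by auto
  define w where "w = (\<alpha> - x) / \<beta>"
  have "x < \<alpha> - \<beta> * ((s - lo) / h) \<longleftrightarrow> s < lo + h * w" for s
    using h \<beta> by (simp add: w_def field_simps)
  then have "{s. lo \<le> s \<and> s < lo + h \<and> x < \<alpha> - \<beta> * ((s - lo) / h)} =
      {s. lo \<le> s \<and> s < lo + h \<and> s < lo + h * w}"
    by auto
  moreover have "max 0 (min (lo + h) (lo + h * w) - lo) = h * unit_clamp w"
  proof (cases "0 \<le> w")
    case True
    then show ?thesis
      using h by (cases "w \<le> 1") (auto simp: unit_clamp_def max_def min_def algebra_simps)
  next
    case False
    then have "h * w < 0"
      using h by (simp add: mult_pos_neg)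
    then show ?thesis
      using False h by (auto simp: unit_clamp_def max_def min_def algebra_simps)
  qed
  ultimately show ?thesis
    by (simp add: emeasure_lborel_Ico_inter_less w_def)
next
  case True
  then have empty: "{s. lo \<le> s \<and> s < lo + h \<and> x < \<alpha> - \<beta> * ((s - lo) / h)} = {}"
    by auto
  show ?thesis
    unfolding empty using True by simp
qed

lemma ennreal_sum_of_pairs:
  assumes "0 \<le> a" "0 \<le> b" "0 \<le> c" "0 \<le> d"
  shows "of_nat m * ennreal a + of_nat m * ennreal a + ennreal b + ennreal b
      + of_nat n * ennreal c + of_nat n * ennreal c + ennreal d + ennreal d
    = ennreal (2 * real m * a + 2 * b + 2 * real n * c + 2 * d)"
proof -
  have mult: "of_nat k * ennreal y = ennreal (real k * y)" if "0 \<le> y" for k y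
    using that by (simp add: ennreal_of_nat_eq_real_of_nat ennreal_mult)
  have "of_nat m * ennreal a + of_nat m * ennreal a + ennreal b + ennreal b
      + of_nat n * ennreal c + of_nat n * ennreal c + ennreal d + ennreal d
    = ennreal (real m * a) + ennreal (real m * a) + ennreal b + ennreal b
      + ennreal (real n * c) + ennreal (real n * c) + ennreal d + ennreal d"
    using assms by (simp add: mult)
  also have "\<dots> = ennreal (real m * a + real m * a + b + b + real n * c + real n * c + d + d)"
  proof -
    have "0 \<le> real m * a" "0 \<le> real n * c"
      using assms by simp_all
    then show ?thesis
      using assms by (simp only: ennreal_plus[symmetric] add_nonneg_nonneg)
  qed
  also have "real m * a + real m * a + b + b + real n * c + real n * c + d + d =
      2 * real m * a + 2 * b + 2 * real n * c + 2 * d"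
    by simp
  finally show ?thesis .
qed

lemma sets_ereal_image: "A \<in> sets borel \<Longrightarrow> ereal ` A \<in> sets (borel :: ereal measure)"
proof -
  assume [measurable]: "A \<in> sets borel"
  have "ereal ` A = {x \<in> space borel. real_of_ereal x \<in> A \<and> \<bar>x\<bar> \<noteq> \<infinity>}"
    by (auto simp: image_iff elim!: ereal_cases[of x for x])
  also have "\<dots> \<in> sets borel"
    by measurable
  finally show ?thesis .
qed

lemma nn_integral_triangle:
  fixes b c :: real
  assumes "0 < b" "0 < c"
  shows "(\<integral>\<^sup>+ x. ennreal (c * (b - x)) * indicator {0<..<b} x \<partial>lborel) = ennreal (c * b\<^sup>2 / 2)"
proof -
  let ?F = "\<lambda>x. c * (b * x - x\<^sup>2 / 2)"
  have "((\<lambda>x. c * (b - x)) has_integral (?F b - ?F 0)) {0..b}"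
  proof (rule fundamental_theorem_of_calculus)
    fix x :: real
    have "(?F has_real_derivative c * (b - x)) (at x within {0..b})"
      by (auto intro!: derivative_eq_intros simp: algebra_simps)
    then show "(?F has_vector_derivative c * (b - x)) (at x within {0..b})"
      by (simp add: has_real_derivative_iff_has_vector_derivative)
  qed (use assms in simp)
  then have "((\<lambda>x. c * (b - x)) has_integral (c * b\<^sup>2 / 2)) {0<..<b}"
    by (simp add: has_integral_Icc_iff_Ioo power2_eq_square algebra_simps)
  from nn_integral_has_integral_lebesgue'[OF _ this] show ?thesis
    using assms by auto
qed

lemma triangle_mass_le_1:
  assumes "0 < b" "b \<le> T" "0 < c" and N: "N \<in> A_M T" "has_density_on T N f"
    and f: "\<forall>x\<in>{0<..<b}. f x = c * (b - x)"
  shows "c * b\<^sup>2 / 2 \<le> 1"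
proof -
  have "emeasure N (ereal ` {0<..<b}) = (\<integral>\<^sup>+ x. indicator {0<..<b} x * ennreal (f x) \<partial>lborel)"
  proof -
    have "{0<..<b} \<subseteq> {0<..<T}" "{0<..<b} \<in> sets lborel"
      using \<open>b \<le> T\<close> by auto
    then show ?thesis
      using N(2) unfolding has_density_on_def by blast
  qed
  also have "\<dots> = (\<integral>\<^sup>+ x. ennreal (c * (b - x)) * indicator {0<..<b} x \<partial>lborel)"
    using f by (intro nn_integral_cong) (auto simp: indicator_def)
  also have "\<dots> = ennreal (c * b\<^sup>2 / 2)"
    using assms by (intro nn_integral_triangle)
  finally have "emeasure N (ereal ` {0<..<b}) = ennreal (c * b\<^sup>2 / 2)" .
  moreover have "emeasure N (ereal ` {0<..<b}) \<le> 1"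
    using N(1) prob_space.emeasure_le_1 unfolding A_M_def by blast
  ultimately have "ennreal (c * b\<^sup>2 / 2) \<le> 1"
    by simp
  then show ?thesis
    by (simp add: ennreal_le_1)
qed

lemma sum_alternating:
  "(\<Sum>i<2 * m. F (if even i then x else y)) = of_nat m * (F x + F y :: 'a::comm_semiring_1)"
proof (induction m)
  case (Suc m)
  have "{..<2 * Suc m} = insert (2 * m + 1) (insert (2 * m) {..<2 * m})"
    by auto
  then show ?case
    using Suc by (simp add: algebra_simps)
qed simp

locale triangle_process =
  fixes b c T :: real
  assumes b_pos: "0 < b" and b_le_T: "b \<le> T" and T_le_1: "T \<le> 1" and c_pos: "0 < c"
    and mass_le_1: "c * b\<^sup>2 / 2 \<le> 1"
begin

definition mass :: real where
  "mass = c * b\<^sup>2 / 2"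

definition K :: nat where
  "K = nat \<lfloor>1 / b\<rfloor>"

definition r :: real where
  "r = 1 - real K * b"

definition q1 :: real where
  "q1 = mass * r / b"

definition q2 :: real where
  "q2 = mass - q1"

definition gap_pattern :: "nat \<Rightarrow> real \<Rightarrow> real \<Rightarrow> real \<Rightarrow> nat \<Rightarrow> real" where
  "gap_pattern m t a1 a2 i =
    (if i < 2 * m then (if even i then b * t else b - b * t)
     else if i = 2 * m then a1 else if i = 2 * m + 1 then a2 else 0)"

text \<open>In both regimes of s the gaps add up to K b + r = 1, unused slots being gaps of length 0
  (repeated zeros). The weights q1 = mass r / b and q2 = mass (b - r) / b are what makes the
  number of gaps longer than x, averaged over s, equal to c (b - x) for x < b.\<close>

definition gap :: "real \<Rightarrow> nat \<Rightarrow> real" where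
  "gap s i =
    (if s < q1 then gap_pattern K (s / q1) (r * (s / q1)) (r - r * (s / q1)) i
     else if s < mass then gap_pattern (K - 1) ((s - q1) / q2)
       (r + (b - r) * ((s - q1) / q2)) (b - (b - r) * ((s - q1) / q2)) i
     else 0)"

definition ngaps :: nat where
  "ngaps = 2 * K + 2"

definition config :: "real \<Rightarrow> real \<Rightarrow> real" where
  "config s = (if s < mass then sine_product (\<lambda>i. \<Sum>j<i. gap s j) ngaps else (\<lambda>_. 1))"

lemma mass_pos: "0 < mass"
  using b_pos c_pos by (simp add: mass_def)

lemma K_ge_1: "1 \<le> K"
  using b_pos b_le_T T_le_1 unfolding K_def by (simp add: le_nat_iff one_le_floor)

lemma K_b_plus_r: "real K * b + r = 1"
  by (simp add: r_def)

lemma r_bounds: "0 \<le> r" "r < b"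
proof -
  have K: "real K = of_int \<lfloor>1 / b\<rfloor>"
    using K_ge_1 by (simp add: K_def)
  have "of_int \<lfloor>1 / b\<rfloor> * b \<le> 1" "1 < (of_int \<lfloor>1 / b\<rfloor> + 1) * b"
    using b_pos by (simp_all add: pos_le_divide_eq[symmetric] pos_divide_less_eq[symmetric])
  then show "0 \<le> r" "r < b"
    unfolding r_def K by (simp_all add: algebra_simps)
qed

lemma q_bounds: "0 \<le> q1" "0 < q2" "q1 + q2 = mass" "q1 = mass * r / b" "q2 = mass * (b - r) / b"
  using mass_pos r_bounds b_pos unfolding q1_def q2_def by (auto simp: field_simps)

lemma sum_gap_pattern:
  assumes "2 * m + 2 \<le> N" "F 0 = 0"
  shows "(\<Sum>i<N. F (gap_pattern m t a1 a2 i)) =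
    of_nat m * (F (b * t) + F (b - b * t)) + F a1 + (F a2 :: 'a::comm_semiring_1)"
proof -
  have N: "{..<N} = {..<2 * m} \<union> {2 * m, 2 * m + 1} \<union> {2 * m + 2..<N}"
    using assms by auto
  have "(\<Sum>i<N. F (gap_pattern m t a1 a2 i)) = (\<Sum>i<2 * m. F (gap_pattern m t a1 a2 i))
      + (\<Sum>i\<in>{2 * m, 2 * m + 1}. F (gap_pattern m t a1 a2 i))
      + (\<Sum>i\<in>{2 * m + 2..<N}. F (gap_pattern m t a1 a2 i))"
    unfolding N by (subst sum.union_disjoint, auto simp: ac_simps)+
  also have "(\<Sum>i\<in>{2 * m + 2..<N}. F (gap_pattern m t a1 a2 i)) = 0"
    using assms(2) by (intro sum.neutral) (auto simp: gap_pattern_def)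
  also have "(\<Sum>i<2 * m. F (gap_pattern m t a1 a2 i)) = (\<Sum>i<2 * m. F (if even i then b * t else b - b * t))"
    by (intro sum.cong) (auto simp: gap_pattern_def)
  also have "(\<Sum>i\<in>{2 * m, 2 * m + 1}. F (gap_pattern m t a1 a2 i)) = F a1 + F a2"
    by (simp add: gap_pattern_def)
  finally show ?thesis
    by (simp add: sum_alternating add.assoc)
qed

lemma sum_gap:
  assumes "F 0 = 0"
  shows "(\<Sum>i<ngaps. F (gap s i)) =
    (if s < q1 then of_nat K * (F (b * (s / q1)) + F (b - b * (s / q1)))
        + F (r * (s / q1)) + F (r - r * (s / q1))
     else if s < mass then of_nat (K - 1) * (F (b * ((s - q1) / q2)) + F (b - b * ((s - q1) / q2)))
        + F (r + (b - r) * ((s - q1) / q2)) + F (b - (b - r) * ((s - q1) / q2))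
     else (0 :: 'a::comm_semiring_1))"
proof -
  consider "s < q1" | "q1 \<le> s" "s < mass" | "mass \<le> s"
    by linarith
  then show ?thesis
  proof cases
    case 1
    then have pattern: "gap s = gap_pattern K (s / q1) (r * (s / q1)) (r - r * (s / q1))"
      by (simp add: gap_def fun_eq_iff)
    show ?thesis
      unfolding ngaps_def pattern using 1 assms by (subst sum_gap_pattern) auto
  next
    case 2
    then have pattern: "gap s = gap_pattern (K - 1) ((s - q1) / q2)
        (r + (b - r) * ((s - q1) / q2)) (b - (b - r) * ((s - q1) / q2))"
      by (simp add: gap_def fun_eq_iff)
    show ?thesis
      unfolding ngaps_def pattern using 2 assms K_ge_1 by (subst sum_gap_pattern) auto
  next
    case 3
    then show ?thesis
      using assms q_bounds(1-3) by (simp add: gap_def)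
  qed
qed

lemma gap_bounds:
  assumes "0 \<le> s" "s < mass"
  shows "0 \<le> gap s i" "gap s i \<le> b"
proof -
  have scaled: "0 \<le> \<gamma> * t" "\<gamma> * t \<le> \<gamma>" if "0 \<le> \<gamma>" "0 \<le> t" "t \<le> 1" for \<gamma> t :: real
    using that by (auto intro: mult_left_le)
  consider "s < q1" | "q1 \<le> s"
    by linarith
  then have "0 \<le> gap s i \<and> gap s i \<le> b"
  proof cases
    case 1
    then have "0 \<le> s / q1" "s / q1 \<le> 1"
      using assms by auto
    then show ?thesis
      using 1 scaled[of b "s / q1"] scaled[of r "s / q1"] r_bounds b_pos
      by (auto simp: gap_def gap_pattern_def)
  next
    case 2
    then have "0 \<le> (s - q1) / q2" "(s - q1) / q2 \<le> 1"
      using assms q_bounds(1-3) by auto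
    then show ?thesis
      using 2 assms scaled[of b "(s - q1) / q2"] scaled[of "b - r" "(s - q1) / q2"] r_bounds b_pos
      by (auto simp: gap_def gap_pattern_def)
  qed
  then show "0 \<le> gap s i" "gap s i \<le> b"
    by auto
qed

lemma gap_configuration_config:
  assumes "0 \<le> s" "s < mass"
  shows "gap_configuration (gap s) ngaps T (config s)"
proof
  show "(\<Sum>i<ngaps. gap s i) = 1"
    using sum_gap[of id s] assms K_b_plus_r K_ge_1 q_bounds by (simp add: algebra_simps of_nat_diff)
next
  show "gap s i \<le> T" for i
    using gap_bounds[OF assms, of i] b_le_T by simp
qed (use assms gap_bounds in \<open>auto simp: config_def sine_product_in_Hper zeros_sine_product\<close>)

lemma config_in_Hper: "config s \<in> Hper"
  by (simp add: config_def sine_product_in_Hper Hper_const)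

lemma measurable_gap[measurable]: "(\<lambda>s. gap s i) \<in> borel_measurable borel"
  unfolding gap_def gap_pattern_def by measurable

lemma measurable_config: "(\<lambda>p. config (fst p) (snd p)) \<in> borel_measurable (borel \<Otimes>\<^sub>M borel)"
proof -
  have "(\<lambda>p. config (fst p) (snd p)) = (\<lambda>p. if fst p < mass
      then \<Prod>i<ngaps. (sin (pi * (snd p - (\<Sum>j<i. gap (fst p) j))))\<^sup>2 else 1)"
    by (auto simp: config_def sine_product_def)
  then show ?thesis
    by simp
qed

definition gap_count :: "real \<Rightarrow> real \<Rightarrow> ennreal" where
  "gap_count s x = (\<Sum>i<ngaps. indicator {..<gap s i} x)"

lemma gap_count_eq_sum_if: "gap_count s x = (\<Sum>i<ngaps. if x < gap s i then 1 else 0)"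
  unfolding gap_count_def by (intro sum.cong) (auto simp: indicator_def)

lemma measurable_gap_count[measurable]:
  "(\<lambda>p. gap_count (fst p) (snd p)) \<in> borel_measurable (borel \<Otimes>\<^sub>M borel)"
  "gap_count s \<in> borel_measurable borel"
  unfolding gap_count_eq_sum_if[abs_def] by simp_all

lemma emeasure_phase_config:
  assumes A: "A \<in> sets borel" "A \<subseteq> {0<..}" and "0 \<le> s"
  shows "emeasure lborel {\<theta>\<in>{0<..1}. first_zero (shift \<theta> (config s)) 0 T \<in> ereal ` A} =
    (\<integral>\<^sup>+ x. indicator A x * gap_count s x \<partial>lborel)"
proof (cases "s < mass")
  case True
  interpret gap_configuration "gap s" ngaps T "config s"
    using \<open>0 \<le> s\<close> True by (rule gap_configuration_config)
  have "emeasure lborel {\<theta>\<in>{0<..1}. first_zero (shift \<theta> (config s)) 0 T \<in> ereal ` A} =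
      (\<Sum>i<ngaps. emeasure lborel (A \<inter> {..< gap s i}))"
    using A by (rule emeasure_phase_first_zero)
  also have "\<dots> = (\<Sum>i<ngaps. \<integral>\<^sup>+ x. indicator (A \<inter> {..< gap s i}) x \<partial>lborel)"
    using A by (intro sum.cong refl nn_integral_indicator[symmetric]) auto
  also have "\<dots> = (\<integral>\<^sup>+ x. indicator A x * gap_count s x \<partial>lborel)"
    using A(1) unfolding gap_count_def
    by (subst nn_integral_sum[symmetric]) (auto simp: sum_distrib_left indicator_inter_arith)
  finally show ?thesis .
next
  case False
  then have empty: "{\<theta>\<in>{0<..1}. first_zero (shift \<theta> (config s)) 0 T \<in> ereal ` A} = {}"
    by (auto simp: first_zero_def config_def shift_def zeros_def)
  have zero: "indicator A x * gap_count s x = 0" for x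
    using False A(2) q_bounds(1-3) by (cases "x \<in> A") (auto simp: gap_count_def gap_def)
  show ?thesis
    unfolding empty zero by simp
qed

lemma gap_count_decomposition:
  assumes "0 < x"
  shows "indicator {0..1} s * gap_count s x =
      of_nat K * indicator {s. 0 \<le> s \<and> s < q1 \<and> x < b * (s / q1)} s
    + of_nat K * indicator {s. 0 \<le> s \<and> s < q1 \<and> x < b - b * (s / q1)} s
    + indicator {s. 0 \<le> s \<and> s < q1 \<and> x < r * (s / q1)} s
    + indicator {s. 0 \<le> s \<and> s < q1 \<and> x < r - r * (s / q1)} s
    + of_nat (K - 1) * indicator {s. q1 \<le> s \<and> s < mass \<and> x < b * ((s - q1) / q2)} s
    + of_nat (K - 1) * indicator {s. q1 \<le> s \<and> s < mass \<and> x < b - b * ((s - q1) / q2)} s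
    + indicator {s. q1 \<le> s \<and> s < mass \<and> x < r + (b - r) * ((s - q1) / q2)} s
    + (indicator {s. q1 \<le> s \<and> s < mass \<and> x < b - (b - r) * ((s - q1) / q2)} s :: ennreal)"
proof -
  have q: "0 \<le> q1" "q1 \<le> mass" "mass \<le> 1"
    using q_bounds(1-3) mass_le_1 by (auto simp: mass_def)
  show ?thesis
  proof (cases "0 \<le> s \<and> s \<le> 1")
    case True
    have F0: "indicator {..<0::real} x = (0::ennreal)"
      using assms by simp
    show ?thesis
      unfolding gap_count_def sum_gap[where F="\<lambda>l. indicator {..<l} x", OF F0]
      using True q by (auto simp: indicator_def mult_2_right)
  qed (use q in \<open>auto simp: indicator_def\<close>)
qed

lemma average_gap_count_formula:
  assumes "0 < x"
  shows "2 * real K * q1 * unit_clamp ((b - x) / b) + 2 * q1 * unit_clamp ((r - x) / r)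
      + 2 * real (K - 1) * q2 * unit_clamp ((b - x) / b) + 2 * q2 * unit_clamp ((b - x) / (b - r))
    = (if x < b then c * (b - x) else 0)"
proof (cases "x < b")
  case False
  then show ?thesis
    using assms b_pos r_bounds
    by (cases "r = 0") (auto simp: unit_clamp_def divide_nonpos_pos)
next
  case True
  have K: "real (K - 1) = real K - 1"
    using K_ge_1 by (simp add: of_nat_diff)
  have identity: "2 * real K * q1 * ((b - x) / b) + 2 * q1 * u + 2 * (real K - 1) * q2 * ((b - x) / b)
      + 2 * q2 * v = c * (b - x)" if "r * u + (b - r) * v = b - x" for u v
  proof -
    have "2 * q1 * u + 2 * q2 * v = 2 * mass / b * (r * u + (b - r) * v)"
      using b_pos unfolding q_bounds(4,5) by (simp add: field_simps)
    then have "2 * real K * q1 * ((b - x) / b) + 2 * q1 * u + 2 * (real K - 1) * q2 * ((b - x) / b)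
        + 2 * q2 * v = 2 * real K * q1 * ((b - x) / b) + 2 * (real K - 1) * q2 * ((b - x) / b)
        + 2 * mass / b * (b - x)"
      using that by simp
    also have "\<dots> = 2 * mass / b * ((b - x) / b) * (real K * b + r)"
      using b_pos unfolding q_bounds(4,5) by (simp add: field_simps)
    also have "\<dots> = c * (b - x)"
      unfolding K_b_plus_r mass_def using b_pos by (simp add: field_simps power2_eq_square)
    finally show ?thesis .
  qed
  have "unit_clamp ((b - x) / b) = (b - x) / b"
    using True assms by (auto simp: unit_clamp_def field_simps)
  moreover have "r * unit_clamp ((r - x) / r) + (b - r) * unit_clamp ((b - x) / (b - r)) = b - x"
  proof (cases "x \<le> r")
    case True
    then show ?thesis
      using \<open>x < b\<close> assms r_bounds by (auto simp: unit_clamp_def field_simps)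
  next
    case False
    then have "(r - x) / r \<le> 0"
      using r_bounds by (simp add: divide_nonpos_nonneg)
    then show ?thesis
      using False \<open>x < b\<close> r_bounds by (auto simp: unit_clamp_def field_simps)
  qed
  ultimately show ?thesis
    using True identity K by simp
qed

lemma nn_integral_gap_count:
  assumes x: "0 < x"
  shows "(\<integral>\<^sup>+ s. indicator {0..1} s * gap_count s x \<partial>lborel) = ennreal (if x < b then c * (b - x) else 0)"
proof -
  have q: "0 \<le> q1" "0 < q2" "q1 = 0 \<or> 0 < r"
    using q_bounds r_bounds by (auto simp: q_bounds(4))
  define S1 where "S1 = {s. 0 \<le> s \<and> s < q1 \<and> x < b * (s / q1)}"
  define S2 where "S2 = {s. 0 \<le> s \<and> s < q1 \<and> x < b - b * (s / q1)}"
  define S3 where "S3 = {s. 0 \<le> s \<and> s < q1 \<and> x < r * (s / q1)}"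
  define S4 where "S4 = {s. 0 \<le> s \<and> s < q1 \<and> x < r - r * (s / q1)}"
  define S5 where "S5 = {s. q1 \<le> s \<and> s < mass \<and> x < b * ((s - q1) / q2)}"
  define S6 where "S6 = {s. q1 \<le> s \<and> s < mass \<and> x < b - b * ((s - q1) / q2)}"
  define S7 where "S7 = {s. q1 \<le> s \<and> s < mass \<and> x < r + (b - r) * ((s - q1) / q2)}"
  define S8 where "S8 = {s. q1 \<le> s \<and> s < mass \<and> x < b - (b - r) * ((s - q1) / q2)}"
  have sets: "S1 \<in> sets lborel" "S2 \<in> sets lborel" "S3 \<in> sets lborel" "S4 \<in> sets lborel"
    "S5 \<in> sets lborel" "S6 \<in> sets lborel" "S7 \<in> sets lborel" "S8 \<in> sets lborel"
    unfolding S1_def S2_def S3_def S4_def S5_def S6_def S7_def S8_def by measurable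
  have mass: "mass = q1 + q2"
    using q_bounds(3) by simp
  have m1: "emeasure lborel S1 = ennreal (q1 * unit_clamp ((b - x) / b))"
    using emeasure_affine_increasing_exceeds[of q1 b 0 x 0] q(1) b_pos unfolding S1_def by simp
  have m2: "emeasure lborel S2 = ennreal (q1 * unit_clamp ((b - x) / b))"
    using emeasure_affine_decreasing_exceeds[of q1 b 0 x b] q(1) b_pos unfolding S2_def by simp
  have m3: "emeasure lborel S3 = ennreal (q1 * unit_clamp ((r - x) / r))"
    using emeasure_affine_increasing_exceeds[of q1 r 0 x 0] q(1,3) unfolding S3_def by simp
  have m4: "emeasure lborel S4 = ennreal (q1 * unit_clamp ((r - x) / r))"
    using emeasure_affine_decreasing_exceeds[of q1 r 0 x r] q(1,3) unfolding S4_def by simp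
  have m5: "emeasure lborel S5 = ennreal (q2 * unit_clamp ((b - x) / b))"
    using emeasure_affine_increasing_exceeds[of q2 b q1 x 0] q(2) b_pos unfolding S5_def mass by simp
  have m6: "emeasure lborel S6 = ennreal (q2 * unit_clamp ((b - x) / b))"
    using emeasure_affine_decreasing_exceeds[of q2 b q1 x b] q(2) b_pos unfolding S6_def mass by simp
  have m7: "emeasure lborel S7 = ennreal (q2 * unit_clamp ((b - x) / (b - r)))"
    using emeasure_affine_increasing_exceeds[of q2 "b - r" q1 x r] q(2) r_bounds
    unfolding S7_def mass by simp
  have m8: "emeasure lborel S8 = ennreal (q2 * unit_clamp ((b - x) / (b - r)))"
    using emeasure_affine_decreasing_exceeds[of q2 "b - r" q1 x b] q(2) r_bounds
    unfolding S8_def mass by simp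
  have decomposition: "indicator {0..1} s * gap_count s x = of_nat K * indicator S1 s
      + of_nat K * indicator S2 s + indicator S3 s + indicator S4 s + of_nat (K - 1) * indicator S5 s
      + of_nat (K - 1) * indicator S6 s + indicator S7 s + indicator S8 s" for s
    unfolding gap_count_decomposition[OF x] S1_def S2_def S3_def S4_def S5_def S6_def S7_def S8_def ..
  have "(\<integral>\<^sup>+ s. indicator {0..1} s * gap_count s x \<partial>lborel) =
      of_nat K * emeasure lborel S1 + of_nat K * emeasure lborel S2 + emeasure lborel S3 + emeasure lborel S4
      + of_nat (K - 1) * emeasure lborel S5 + of_nat (K - 1) * emeasure lborel S6
      + emeasure lborel S7 + emeasure lborel S8"
    unfolding decomposition using sets by (simp add: nn_integral_add nn_integral_cmult)
  also have "\<dots> = ennreal (2 * real K * (q1 * unit_clamp ((b - x) / b)) + 2 * (q1 * unit_clamp ((r - x) / r))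
      + 2 * real (K - 1) * (q2 * unit_clamp ((b - x) / b)) + 2 * (q2 * unit_clamp ((b - x) / (b - r))))"
    unfolding m1 m2 m3 m4 m5 m6 m7 m8 using q by (intro ennreal_sum_of_pairs) (simp_all add: unit_clamp_nonneg)
  also have "\<dots> = ennreal (if x < b then c * (b - x) else 0)"
    using average_gap_count_formula[OF x] by (simp only: mult.assoc)
  finally show ?thesis .
qed

sublocale random_phase "uniform_measure lborel {0..1}" config
  by (rule random_phase.intro) (simp_all add: prob_space_uniform_measure config_in_Hper measurable_config)

lemma emeasure_law_first_zero_triangle:
  assumes A: "A \<in> sets borel" "A \<subseteq> {0<..}"
  shows "emeasure (distr sample_measure borel (\<lambda>w. first_zero (process w) 0 T)) (ereal ` A) =
    (\<integral>\<^sup>+ x. indicator A x * ennreal (if x < b then c * (b - x) else 0) \<partial>lborel)"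
proof -
  have measurable_integrand:
    "(\<lambda>(s, x). indicator {0..1} s * (indicator A x * gap_count s x)) \<in> borel_measurable (lborel \<Otimes>\<^sub>M lborel)"
  proof -
    have "(\<lambda>p. indicator {0..1::real} (fst p) * (indicator A (snd p) * gap_count (fst p) (snd p)))
        \<in> borel_measurable (borel \<Otimes>\<^sub>M borel)"
      using A(1) by measurable
    then show ?thesis
      by (simp add: case_prod_beta')
  qed
  have "emeasure (distr sample_measure borel (\<lambda>w. first_zero (process w) 0 T)) (ereal ` A) =
      (\<integral>\<^sup>+ s. emeasure lborel {\<theta>\<in>{0<..1}. first_zero (shift \<theta> (config s)) 0 T \<in> ereal ` A}
        \<partial>uniform_measure lborel {0..1})"
    using sets_ereal_image[OF A(1)] by (rule emeasure_law_first_zero)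
  also have "\<dots> = (\<integral>\<^sup>+ s. (\<integral>\<^sup>+ x. indicator A x * gap_count s x \<partial>lborel) \<partial>uniform_measure lborel {0..1})"
    using A by (intro nn_integral_cong_AE AE_uniform_measureI AE_I2 impI emeasure_phase_config) auto
  also have "\<dots> = (\<integral>\<^sup>+ s. (\<integral>\<^sup>+ x. indicator A x * gap_count s x \<partial>lborel) * indicator {0..1} s \<partial>lborel)"
  proof -
    have "(\<lambda>(s, x). indicator A x * gap_count s x) \<in> borel_measurable (lborel \<Otimes>\<^sub>M lborel)"
      using A(1) by (simp add: case_prod_beta')
    then have "(\<lambda>s. \<integral>\<^sup>+ x. indicator A x * gap_count s x \<partial>lborel) \<in> borel_measurable lborel"
      by (rule lborel.borel_measurable_nn_integral)
    then show ?thesis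
      by (simp add: nn_integral_uniform_measure divide_ennreal_def)
  qed
  also have "\<dots> = (\<integral>\<^sup>+ s. (\<integral>\<^sup>+ x. indicator {0..1} s * (indicator A x * gap_count s x) \<partial>lborel) \<partial>lborel)"
    using A(1) by (intro nn_integral_cong) (simp add: nn_integral_cmult mult.commute)
  also have "\<dots> = (\<integral>\<^sup>+ x. (\<integral>\<^sup>+ s. indicator {0..1} s * (indicator A x * gap_count s x) \<partial>lborel) \<partial>lborel)"
    using measurable_integrand by (rule lborel_pair.Fubini'[symmetric])
  also have "\<dots> = (\<integral>\<^sup>+ x. indicator A x * ennreal (if x < b then c * (b - x) else 0) \<partial>lborel)"
  proof (rule nn_integral_cong)
    fix x
    show "(\<integral>\<^sup>+ s. indicator {0..1} s * (indicator A x * gap_count s x) \<partial>lborel) =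
        indicator A x * ennreal (if x < b then c * (b - x) else 0)"
      using A(2) nn_integral_gap_count[of x] by (cases "x \<in> A") auto
  qed
  finally show ?thesis .
qed

lemma has_density_on_law_first_zero:
  assumes "\<forall>x\<in>{0<..<b}. f x = c * (b - x)" "\<forall>x\<in>{b..<T}. f x = 0"
  shows "has_density_on T (distr sample_measure borel (\<lambda>w. first_zero (process w) 0 T)) f"
  unfolding has_density_on_def
proof (intro ballI impI)
  fix A :: "real set" assume A: "A \<in> sets lborel" "A \<subseteq> {0<..<T}"
  have "indicator A x * ennreal (if x < b then c * (b - x) else 0) = indicator A x * ennreal (f x)" for x
    using assms A(2) by (cases "x \<in> A"; cases "x < b") auto
  then show "emeasure (distr sample_measure borel (\<lambda>w. first_zero (process w) 0 T)) (ereal ` A) =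
      (\<integral>\<^sup>+ x. indicator A x * ennreal (f x) \<partial>lborel)"
    using A by (subst emeasure_law_first_zero_triangle) auto
qed

end

theorem mainTheorem16:
  fixes T b c :: real and f :: "real \<Rightarrow> real"
  assumes "0 < T" and "T \<le> 1"
    and "0 < b" and "b \<le> T" and "0 < c"
    and "in_d T f (A_M T)"
    and "\<forall>x\<in>{0<..<b}. f x = c * (b - x)"
    and "\<forall>x\<in>{b..<T}. f x = 0"
  shows "in_d T f (I_M T)"
proof -
  obtain N where "N \<in> A_M T" "has_density_on T N f"
    using assms(6) by (auto simp: in_d_def)
  then have "c * b\<^sup>2 / 2 \<le> 1"
    using assms triangle_mass_le_1 by blast
  then interpret triangle_process b c T
    using assms by unfold_locales
  have "distr sample_measure borel (\<lambda>w. first_zero (process w) 0 T) \<in> I_M T"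
    unfolding I_M_def
    using periodic_stationary_process intrinsic_location_first_zero first_time_first_zero
    by (intro CollectI exI[of _ sample_measure] exI[of _ process] exI[of _ first_zero]) simp
  then show ?thesis
    unfolding in_d_def using has_density_on_law_first_zero assms(7,8) by blast
qed

end
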